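(* Let $\mathcal{X}=\prod_{i=1}^{p}\mathcal{X}_i$, where each $\mathcal{X}_i\subseteq\mathbb{R}^{n_i}$ is closed and convex, and write $\mathbf{x}=(\mathbf{x}(1),\dots,\mathbf{x}(p))$ with $\mathbf{x}(i)=\mathbf{U}_i^{\mathrm T}\mathbf{x}\in\mathbb{R}^{n_i}$ the $i$-th block. Let $f\in C^1(\mathcal{X},\mathbb{R})$ have block-coordinate Lipschitz gradient with block smoothness constants $(L_i)_{i=1}^p$, i.e. $\|\nabla_i f(\mathbf{x}+\mathbf{U}_i\mathbf{h}_i)-\nabla_i f(\mathbf{x})\|\le L_i\|\mathbf{h}_i\|$ for all $\mathbf{x}$ and $\mathbf{h}_i\in\mathbb{R}^{n_i}$, where $\nabla_i f:=\mathbf{U}_i^{\mathrm T}\nabla f$, and set $L:=\max_i L_i$. Let $h\in C(\mathcal{X},\mathbb{R})$ be $\alpha$-strongly convex with block-separable form $h(\mathbf{x})=\sum_{i=1}^p h_i(\mathbf{x}(i))$, and put $\Phi=f+h$ and $\Phi^*=\min_{\mathbf{x}\in\mathcal{X}}\Phi(\mathbf{x})$. Let $\omega$ be a distance generating function with modulus $\alpha$ whose prox-function is block separable, $V(\mathbf{x},\mathbf{z})=\sum_{i=1}^pV_i(\mathbf{x}(i),\mathbf{z}(i))$. Run coordinate mirror descent on $\Phi$ over $\mathcal{X}$ from $\mathbf{x}_0\in\mathcal{X}$ for $N$ outer iterations with all step sizes $\gamma_{k,i}:=\alpha/L$: set $\mathbf{x}_0^0=\mathbf{x}_0$; for each outer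 iteration $k$ and $i=1,\dots,p$, $$\mathbf{x}_k^i(i)\in\arg\min_{\mathbf{u}_i\in\mathcal{X}_i}\Big(\langle\nabla_i f(\mathbf{x}_k^{i-1}),\mathbf{u}_i\rangle+\tfrac{1}{\gamma_{k,i}}V_i(\mathbf{u}_i,\mathbf{x}_k^{i-1}(i))+h_i(\mathbf{u}_i)\Big),\qquad \mathbf{x}_k^i(j)=\mathbf{x}_k^{i-1}(j)\ (j\neq i),$$ and $\mathbf{x}_{k+1}^0:=\mathbf{x}_k^p$, $\mathbf{x}_k:=\mathbf{x}_k^0$. Define $\mathbf{g}_{\mathcal{X},k,i}:=\frac{1}{\gamma_{k,i}}\big(\mathbf{x}_k^{i-1}(i)-\mathbf{x}_k^{i}(i)\big)$, $\Delta(\mathbf{x}_k,\mathbf{x}_{k-1}):=\sum_{i=1}^p\|\mathbf{g}_{\mathcal{X},k,i}\|^2$, and $D:=\big((\Phi(\mathbf{x}_0)-\Phi^* )/L\big)^{1/2}$. Then $$\min_k\Delta(\mathbf{x}_k,\mathbf{x}_{k-1})\le\frac{D^2L}{N(\alpha^2/2L)}=\frac{2D^2L^2}{N\alpha^2},$$ the minimum being over the $N$ outer iterations.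
   Context: A distance generating function with modulus $\alpha>0$ (w.r.t. the Euclidean norm) is a continuously differentiable $\omega:\mathcal{X}\to\mathbb{R}$ with $\langle\mathbf{x}-\mathbf{z},\nabla\omega(\mathbf{x})-\nabla\omega(\mathbf{z})\rangle\ge\alpha\|\mathbf{x}-\mathbf{z}\|^2$ for all $\mathbf{x},\mathbf{z}\in\mathcal{X}$; its prox-function (Bregman divergence) is $V(\mathbf{x},\mathbf{z})=\omega(\mathbf{x})-\omega(\mathbf{z})-\langle\nabla\omega(\mathbf{z}),\mathbf{x}-\mathbf{z}\rangle$. The matrices $\mathbf{U}_i\in\mathbb{R}^{n\times n_i}$ ($n=\sum_i n_i$) satisfy $\mathbf{x}(i)=\mathbf{U}_i^{\mathrm T}\mathbf{x}$ and $\mathbf{x}=\sum_i\mathbf{U}_i\mathbf{x}(i)$. The minimum $\Phi^*$ is assumed to exist. *)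

theory Defs
  imports "HOL-Analysis.Analysis"
begin

text \<open>Coordinates of R^n are indexed by the finite type 'n; blk assigns each coordinate
  to its block (blocks numbered 1..p). block_proj blk i x is U_i U_i^T x, i.e. the i-th
  block x(i) embedded back into R^n (zero outside block i).\<close>
definition block_proj :: "('n::finite \<Rightarrow> nat) \<Rightarrow> nat \<Rightarrow> real^'n \<Rightarrow> real^'n" where
  "block_proj blk i x = (\<chi> j. if blk j = i then x $ j else 0)"

definition strongly_convex_on :: "real \<Rightarrow> ('a::real_normed_vector) set \<Rightarrow> ('a \<Rightarrow> real) \<Rightarrow> bool" where
  "strongly_convex_on \<alpha> S g \<longleftrightarrow> convex S \<and>
     (\<forall>x\<in>S. \<forall>y\<in>S. \<forall>t::real. 0 \<le> t \<and> t \<le> 1 \<longrightarrow>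
        g (t *\<^sub>R x + (1 - t) *\<^sub>R y) \<le> t * g x + (1 - t) * g y - \<alpha> / 2 * t * (1 - t) * (norm (x - y))\<^sup>2)"

definition dist_gen_fun :: "real \<Rightarrow> ('a::real_inner) set \<Rightarrow> ('a \<Rightarrow> real) \<Rightarrow> ('a \<Rightarrow> 'a) \<Rightarrow> bool" where
  "dist_gen_fun \<alpha> X w gw \<longleftrightarrow> 0 < \<alpha> \<and>
     (\<forall>x\<in>X. (w has_derivative (\<lambda>v. gw x \<bullet> v)) (at x within X)) \<and> continuous_on X gw \<and>
     (\<forall>x\<in>X. \<forall>z\<in>X. (x - z) \<bullet> (gw x - gw z) \<ge> \<alpha> * (norm (x - z))\<^sup>2)"

definition bregman :: "('a::real_inner \<Rightarrow> real) \<Rightarrow> ('a \<Rightarrow> 'a) \<Rightarrow> 'a \<Rightarrow> 'a \<Rightarrow> real" where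
  "bregman w gw x z = w x - w z - gw z \<bullet> (x - z)"

end

theory Submission
  imports Defs
begin

(* Each block update is a proximal step. On the slice through the current point y in which
   only block i moves, the block objective of the method coincides up to a constant with
   Psi x = <grad f y, x> + V(x, y) / gamma + h x, which is strongly convex with modulus
   alpha / gamma + alpha; hence the minimiser y' satisfies
   Psi y' + (alpha / gamma + alpha) / 2 * |y' - y|^2 <= Psi y.  Together with the block descent
   lemma f y' <= f y + <grad f y, y' - y> + L / 2 * |y' - y|^2 and V(y', y) >= alpha / 2 * |y' - y|^2
   this gives, whenever gamma * L <= alpha, the sufficient decrease
   Phi y' + alpha * gamma / 2 * |g|^2 <= Phi y for the block gradient mapping g = (y - y') / gamma.
   Summing over blocks and epochs telescopes to alpha * gamma / 2 * (sum of the Delta_k) <= Phi x0 - Phi*,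
   and the minimum of the Delta_k is at most their average; gamma = alpha / L gives the rate. *)

lemma block_proj_add: "block_proj b i (x + y) = block_proj b i x + block_proj b i y"
  by (simp add: block_proj_def vec_eq_iff)

lemma block_proj_diff: "block_proj b i (x - y) = block_proj b i x - block_proj b i y"
  by (simp add: block_proj_def vec_eq_iff)

lemma block_proj_scaleR: "block_proj b i (c *\<^sub>R x) = c *\<^sub>R block_proj b i x"
  by (simp add: block_proj_def vec_eq_iff)

lemma inner_block_proj: "a \<bullet> block_proj b i c = block_proj b i a \<bullet> c"
  unfolding inner_vec_def block_proj_def by (auto intro!: sum.cong)

lemma sum_block_proj:
  assumes "\<forall>j. b j \<in> S" and "finite S"
  shows "(\<Sum>i\<in>S. block_proj b i x) = x"
  using assms by (simp add: vec_eq_iff block_proj_def sum.delta')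

lemma block_proj_diff_eq_if_agree_off:
  assumes "\<forall>j. b j \<in> S" and "\<forall>j\<in>S. j \<noteq> i \<longrightarrow> block_proj b j x = block_proj b j y"
  shows "block_proj b i (x - y) = x - y"
proof -
  have "block_proj b i (x - y) $ c = (x - y) $ c" for c
  proof (cases "b c = i")
    case False
    then have "block_proj b (b c) x $ c = block_proj b (b c) y $ c" using assms by metis
    then show ?thesis using False by (simp add: block_proj_def)
  qed (simp add: block_proj_def)
  then show ?thesis by (simp add: vec_eq_iff)
qed

lemma convex_add_scaleR_mem:
  assumes "convex X" "y \<in> X" "y + d \<in> X" "0 \<le> t" "t \<le> 1"
  shows "y + t *\<^sub>R d \<in> X"
proof -
  have "(1 - t) *\<^sub>R y + t *\<^sub>R (y + d) \<in> X"
    using assms by (auto intro: convexD)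
  then show ?thesis by (simp add: algebra_simps)
qed

lemma first_order_lower_bound_on_segment:
  fixes F :: "'a::real_inner \<Rightarrow> real"
  assumes deriv: "\<forall>x\<in>X. (F has_derivative (\<lambda>v. G x \<bullet> v)) (at x within X)"
    and X: "convex X" "y \<in> X" "y + d \<in> X"
    and growth: "\<And>t. t \<in> {0<..<1} \<Longrightarrow> c * t * (norm d)\<^sup>2 \<le> (G (y + t *\<^sub>R d) - G y) \<bullet> d"
  shows "F y + G y \<bullet> d + c / 2 * (norm d)\<^sup>2 \<le> F (y + d)"
proof -
  define \<phi> where "\<phi> t = F (y + t *\<^sub>R d) - t * (G y \<bullet> d) - c / 2 * t\<^sup>2 * (norm d)\<^sup>2" for t
  define \<phi>' where "\<phi>' t = G (y + t *\<^sub>R d) \<bullet> d - G y \<bullet> d - c * t * (norm d)\<^sup>2" for t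
  have "(\<phi> has_real_derivative \<phi>' t) (at t within {0..1})" if t: "t \<in> {0..1}" for t
  proof -
    have segment: "(\<lambda>s. y + s *\<^sub>R d) ` {0..1} \<subseteq> X"
      using convex_add_scaleR_mem[OF X] by auto
    have "((\<lambda>s. y + s *\<^sub>R d) has_derivative (\<lambda>s. s *\<^sub>R d)) (at t within {0..1})"
      by (auto intro!: derivative_eq_intros)
    then have "((\<lambda>s. F (y + s *\<^sub>R d)) has_derivative (\<lambda>s. G (y + t *\<^sub>R d) \<bullet> (s *\<^sub>R d)))
        (at t within {0..1})"
      using deriv has_derivative_in_compose2[of X F "\<lambda>x v. G x \<bullet> v", OF _ segment t] by blast
    then have F_deriv: "((\<lambda>s. F (y + s *\<^sub>R d)) has_real_derivative G (y + t *\<^sub>R d) \<bullet> d)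
        (at t within {0..1})"
      by (simp add: has_field_derivative_def mult_commute_abs)
    show ?thesis
      unfolding \<phi>_def \<phi>'_def by (rule derivative_eq_intros F_deriv | simp)+
  qed
  then obtain t where t: "t \<in> {0<..<1}" and "\<phi> 1 - \<phi> 0 = \<phi>' t"
    using mvt_simple[of 0 1 \<phi> "\<lambda>t s. \<phi>' t * s"] by (auto simp: has_field_derivative_def)
  moreover have "0 \<le> \<phi>' t"
    using growth[OF t] by (simp add: \<phi>'_def inner_diff_left)
  ultimately show ?thesis by (simp add: \<phi>_def)
qed

lemma first_order_upper_bound_on_segment:
  fixes F :: "'a::real_inner \<Rightarrow> real"
  assumes deriv: "\<forall>x\<in>X. (F has_derivative (\<lambda>v. G x \<bullet> v)) (at x within X)"
    and X: "convex X" "y \<in> X" "y + d \<in> X"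
    and growth: "\<And>t. t \<in> {0<..<1} \<Longrightarrow> (G (y + t *\<^sub>R d) - G y) \<bullet> d \<le> c * t * (norm d)\<^sup>2"
  shows "F (y + d) \<le> F y + G y \<bullet> d + c / 2 * (norm d)\<^sup>2"
proof -
  have neg_deriv: "\<forall>x\<in>X. ((\<lambda>x. - F x) has_derivative (\<lambda>v. - G x \<bullet> v)) (at x within X)"
    using deriv by (auto intro: derivative_eq_intros)
  have neg_growth: "- c * t * (norm d)\<^sup>2 \<le> (- G (y + t *\<^sub>R d) - - G y) \<bullet> d" if "t \<in> {0<..<1}" for t
    using growth[OF that] by (simp add: inner_diff_left)
  from neg_deriv neg_growth have "- F y + - G y \<bullet> d + - c / 2 * (norm d)\<^sup>2 \<le> - F (y + d)"
    by (rule first_order_lower_bound_on_segment[OF _ X])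
  then show ?thesis by simp
qed

lemma strongly_convex_on_add:
  assumes "strongly_convex_on a S g" and "strongly_convex_on b S k"
  shows "strongly_convex_on (a + b) S (\<lambda>x. g x + k x)"
proof -
  have "g (t *\<^sub>R x + (1 - t) *\<^sub>R y) + k (t *\<^sub>R x + (1 - t) *\<^sub>R y)
      \<le> t * (g x + k x) + (1 - t) * (g y + k y) - (a + b) / 2 * t * (1 - t) * (norm (x - y))\<^sup>2"
    if "x \<in> S" "y \<in> S" "0 \<le> t \<and> t \<le> 1" for x y t
  proof -
    from assms(1) that have "g (t *\<^sub>R x + (1 - t) *\<^sub>R y)
        \<le> t * g x + (1 - t) * g y - a / 2 * t * (1 - t) * (norm (x - y))\<^sup>2"
      unfolding strongly_convex_on_def by blast
    moreover from assms(2) that have "k (t *\<^sub>R x + (1 - t) *\<^sub>R y)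
        \<le> t * k x + (1 - t) * k y - b / 2 * t * (1 - t) * (norm (x - y))\<^sup>2"
      unfolding strongly_convex_on_def by blast
    ultimately show ?thesis by (simp add: add_divide_distrib algebra_simps)
  qed
  with assms show ?thesis by (simp add: strongly_convex_on_def)
qed

lemma strongly_convex_on_cmult:
  assumes "0 \<le> c" and "strongly_convex_on a S g"
  shows "strongly_convex_on (c * a) S (\<lambda>x. c * g x)"
proof -
  have "c * g (t *\<^sub>R x + (1 - t) *\<^sub>R y)
      \<le> t * (c * g x) + (1 - t) * (c * g y) - c * a / 2 * t * (1 - t) * (norm (x - y))\<^sup>2"
    if "x \<in> S" "y \<in> S" "0 \<le> t" "t \<le> 1" for x y t
  proof -
    from assms(2) that have "g (t *\<^sub>R x + (1 - t) *\<^sub>R y)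
        \<le> t * g x + (1 - t) * g y - a / 2 * t * (1 - t) * (norm (x - y))\<^sup>2"
      unfolding strongly_convex_on_def by blast
    from mult_left_mono[OF this assms(1)] show ?thesis by (simp add: algebra_simps)
  qed
  with assms(2) show ?thesis by (simp add: strongly_convex_on_def)
qed

lemma strongly_convex_on_add_affine:
  assumes "strongly_convex_on a S g"
  shows "strongly_convex_on a S (\<lambda>x. g x + v \<bullet> x + e)"
  using assms unfolding strongly_convex_on_def
  by (simp add: inner_add_right algebra_simps)

lemma strongly_convex_on_min_gap:
  assumes sc: "strongly_convex_on \<mu> S g" and "y \<in> S" "y' \<in> S"
    and min: "\<And>t. t \<in> {0<..<1} \<Longrightarrow> g y' \<le> g (t *\<^sub>R y + (1 - t) *\<^sub>R y')"
  shows "g y' + \<mu> / 2 * (norm (y - y'))\<^sup>2 \<le> g y"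
proof -
  let ?n = "(norm (y - y'))\<^sup>2"
  have "g y' \<le> g y - \<mu> / 2 * (1 - t) * ?n" if t: "t \<in> {0<..<1}" for t
  proof -
    have "0 \<le> t" "t \<le> 1" using t by auto
    with sc \<open>y \<in> S\<close> \<open>y' \<in> S\<close>
    have "g (t *\<^sub>R y + (1 - t) *\<^sub>R y') \<le> t * g y + (1 - t) * g y' - \<mu> / 2 * t * (1 - t) * ?n"
      unfolding strongly_convex_on_def by blast
    with min[OF t] have "g y' \<le> t * g y + (1 - t) * g y' - \<mu> / 2 * t * (1 - t) * ?n"
      by linarith
    then have "t * g y' \<le> t * (g y - \<mu> / 2 * (1 - t) * ?n)"
      by (simp add: algebra_simps)
    then show ?thesis using t by simp
  qed
  then have "\<forall>\<^sub>F t in at_right 0. g y' \<le> g y - \<mu> / 2 * (1 - t) * ?n"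
    using eventually_at_right_real[of 0 1] by (auto elim: eventually_mono)
  moreover have "((\<lambda>t. g y - \<mu> / 2 * (1 - t) * ?n) \<longlongrightarrow> g y - \<mu> / 2 * (1 - 0) * ?n) (at_right 0)"
    by (intro tendsto_intros)
  ultimately have "g y' \<le> g y - \<mu> / 2 * (1 - 0) * ?n"
    by (intro tendsto_lowerbound) auto
  then show ?thesis by simp
qed

lemma dist_gen_fun_bregman_lower_bound:
  assumes dgf: "dist_gen_fun \<alpha> X w gw" and X: "convex X" "x \<in> X" "z \<in> X"
  shows "\<alpha> / 2 * (norm (x - z))\<^sup>2 \<le> bregman w gw x z"
proof -
  have deriv: "\<forall>x\<in>X. (w has_derivative (\<lambda>v. gw x \<bullet> v)) (at x within X)"
    and mono: "\<forall>x\<in>X. \<forall>z\<in>X. \<alpha> * (norm (x - z))\<^sup>2 \<le> (x - z) \<bullet> (gw x - gw z)"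
    using dgf by (auto simp: dist_gen_fun_def)
  define d where "d = x - z"
  have zd: "z + d \<in> X" using X by (simp add: d_def)
  have "w z + gw z \<bullet> d + \<alpha> / 2 * (norm d)\<^sup>2 \<le> w (z + d)"
  proof (rule first_order_lower_bound_on_segment[OF deriv X(1,3) zd])
    fix t :: real assume t: "t \<in> {0<..<1}"
    have "z + t *\<^sub>R d \<in> X"
      using convex_add_scaleR_mem[OF X(1,3) zd] t by simp
    then have "\<alpha> * (norm (t *\<^sub>R d))\<^sup>2 \<le> (t *\<^sub>R d) \<bullet> (gw (z + t *\<^sub>R d) - gw z)"
      using mono X(3) by (metis add_diff_cancel_left')
    then have "t * (\<alpha> * t * (norm d)\<^sup>2) \<le> t * ((gw (z + t *\<^sub>R d) - gw z) \<bullet> d)"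
      using t by (simp add: power2_eq_square inner_commute algebra_simps)
    then show "\<alpha> * t * (norm d)\<^sup>2 \<le> (gw (z + t *\<^sub>R d) - gw z) \<bullet> d"
      using t by simp
  qed
  then show ?thesis by (simp add: bregman_def d_def)
qed

lemma dist_gen_fun_strongly_convex:
  assumes dgf: "dist_gen_fun \<alpha> X w gw" and X: "convex X"
  shows "strongly_convex_on \<alpha> X w"
  unfolding strongly_convex_on_def
proof (intro conjI X ballI allI impI)
  fix a b and t :: real
  assume ab: "a \<in> X" "b \<in> X" and t: "0 \<le> t \<and> t \<le> 1"
  define m where "m = t *\<^sub>R a + (1 - t) *\<^sub>R b"
  let ?n = "(norm (a - b))\<^sup>2"
  have m: "m \<in> X" using X ab t by (auto simp: m_def intro: convexD)
  have "a - m = (1 - t) *\<^sub>R (a - b)" by (simp add: m_def algebra_simps)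
  then have "\<alpha> / 2 * (1 - t)\<^sup>2 * ?n \<le> bregman w gw a m"
    using dist_gen_fun_bregman_lower_bound[OF dgf X ab(1) m] by (simp add: power_mult_distrib)
  moreover have "b - m = (- t) *\<^sub>R (a - b)" by (simp add: m_def algebra_simps)
  then have "\<alpha> / 2 * t\<^sup>2 * ?n \<le> bregman w gw b m"
    using dist_gen_fun_bregman_lower_bound[OF dgf X ab(2) m] by (simp add: power_mult_distrib)
  ultimately have "t * (\<alpha> / 2 * (1 - t)\<^sup>2 * ?n) + (1 - t) * (\<alpha> / 2 * t\<^sup>2 * ?n)
      \<le> t * bregman w gw a m + (1 - t) * bregman w gw b m"
    using t by (intro add_mono mult_left_mono) auto
  \<comment> \<open>the first-order terms cancel because t (a - m) + (1 - t) (b - m) = 0\<close>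
  also have "t * bregman w gw a m + (1 - t) * bregman w gw b m = t * w a + (1 - t) * w b - w m"
    unfolding bregman_def m_def by (simp add: inner_diff_right inner_add_right algebra_simps)
  finally have "t * (\<alpha> / 2 * (1 - t)\<^sup>2 * ?n) + (1 - t) * (\<alpha> / 2 * t\<^sup>2 * ?n)
      \<le> t * w a + (1 - t) * w b - w m" .
  moreover have "t * (\<alpha> / 2 * (1 - t)\<^sup>2 * ?n) + (1 - t) * (\<alpha> / 2 * t\<^sup>2 * ?n)
      = \<alpha> / 2 * t * (1 - t) * ?n"
    by (simp add: power2_eq_square field_simps)
  ultimately show "w m \<le> t * w a + (1 - t) * w b - \<alpha> / 2 * t * (1 - t) * ?n"
    by linarith
qed

lemma strongly_convex_on_bregman:
  assumes "dist_gen_fun \<alpha> X w gw" and "convex X"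
  shows "strongly_convex_on \<alpha> X (\<lambda>x. bregman w gw x z)"
proof -
  have "strongly_convex_on \<alpha> X (\<lambda>x. w x + (- gw z) \<bullet> x + (gw z \<bullet> z - w z))"
    using dist_gen_fun_strongly_convex[OF assms] by (rule strongly_convex_on_add_affine)
  then show ?thesis
    by (simp add: bregman_def inner_diff_right algebra_simps)
qed

lemma block_lipschitz_descent:
  fixes f :: "real^'n::finite \<Rightarrow> real"
  assumes deriv: "\<forall>x\<in>X. (f has_derivative (\<lambda>v. gf x \<bullet> v)) (at x within X)"
    and X: "convex X" "y \<in> X" "y + d \<in> X" and d: "block_proj b i d = d"
    and lip: "\<forall>x\<in>X. \<forall>u. x + block_proj b i u \<in> X \<longrightarrow>
        norm (block_proj b i (gf (x + block_proj b i u)) - block_proj b i (gf x))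
          \<le> L * norm (block_proj b i u)"
  shows "f (y + d) \<le> f y + gf y \<bullet> d + L / 2 * (norm d)\<^sup>2"
proof (rule first_order_upper_bound_on_segment[OF deriv X])
  fix t :: real assume t: "t \<in> {0<..<1}"
  have td: "block_proj b i (t *\<^sub>R d) = t *\<^sub>R d" using d by (simp add: block_proj_scaleR)
  have "y + t *\<^sub>R d \<in> X" using convex_add_scaleR_mem[OF X] t by simp
  then have lip_t: "norm (block_proj b i (gf (y + t *\<^sub>R d)) - block_proj b i (gf y)) \<le> L * (t * norm d)"
    using lip X(2) td t by (metis abs_of_pos greaterThanLessThan_iff norm_scaleR)
  have "(gf (y + t *\<^sub>R d) - gf y) \<bullet> d = (block_proj b i (gf (y + t *\<^sub>R d)) - block_proj b i (gf y)) \<bullet> d"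
    by (metis d inner_block_proj block_proj_diff)
  also have "\<dots> \<le> norm (block_proj b i (gf (y + t *\<^sub>R d)) - block_proj b i (gf y)) * norm d"
    by (rule norm_cauchy_schwarz)
  also have "\<dots> \<le> L * (t * norm d) * norm d"
    by (rule mult_right_mono[OF lip_t]) simp
  finally show "(gf (y + t *\<^sub>R d) - gf y) \<bullet> d \<le> L * t * (norm d)\<^sup>2"
    by (simp add: power2_eq_square algebra_simps)
qed

locale block_composite_problem =
  fixes blk :: "'a::finite \<Rightarrow> nat" and p :: nat
    and Xb :: "nat \<Rightarrow> (real^'a) set" and X :: "(real^'a) set"
    and f :: "real^'a \<Rightarrow> real" and gf :: "real^'a \<Rightarrow> real^'a" and L :: real
    and h :: "real^'a \<Rightarrow> real" and hb :: "nat \<Rightarrow> real^'a \<Rightarrow> real"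
    and \<alpha> :: real and w :: "real^'a \<Rightarrow> real" and gw :: "real^'a \<Rightarrow> real^'a"
    and Vb :: "nat \<Rightarrow> real^'a \<Rightarrow> real^'a \<Rightarrow> real"
  assumes blk_range: "\<forall>j. blk j \<in> {1..p}"
    and Xb_convex: "\<forall>i\<in>{1..p}. convex (Xb i)"
    and X_def: "X = {x. \<forall>i\<in>{1..p}. block_proj blk i x \<in> Xb i}"
    and f_deriv: "\<forall>x\<in>X. (f has_derivative (\<lambda>v. gf x \<bullet> v)) (at x within X)"
    and block_lipschitz: "\<forall>i\<in>{1..p}. \<forall>x\<in>X. \<forall>u. x + block_proj blk i u \<in> X \<longrightarrow>
        norm (block_proj blk i (gf (x + block_proj blk i u)) - block_proj blk i (gf x))
          \<le> L * norm (block_proj blk i u)"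
    and h_sc: "strongly_convex_on \<alpha> X h"
    and h_sep: "\<forall>x\<in>X. h x = (\<Sum>i=1..p. hb i (block_proj blk i x))"
    and w_dgf: "dist_gen_fun \<alpha> X w gw"
    and V_sep: "\<forall>x\<in>X. \<forall>z\<in>X. bregman w gw x z
        = (\<Sum>i=1..p. Vb i (block_proj blk i x) (block_proj blk i z))"
begin

definition agrees_off_block :: "nat \<Rightarrow> real^'a \<Rightarrow> real^'a \<Rightarrow> bool" where
  "agrees_off_block i x y \<longleftrightarrow> (\<forall>j\<in>{1..p}. j \<noteq> i \<longrightarrow> block_proj blk j x = block_proj blk j y)"

lemma convex_X: "convex X"
proof (rule convexI)
  fix x y :: "real^'a" and u v :: real
  assume "x \<in> X" "y \<in> X" "0 \<le> u" "0 \<le> v" "u + v = 1"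
  then have "u *\<^sub>R block_proj blk i x + v *\<^sub>R block_proj blk i y \<in> Xb i" if "i \<in> {1..p}" for i
    using Xb_convex that X_def by (auto intro: convexD)
  then show "u *\<^sub>R x + v *\<^sub>R y \<in> X"
    using X_def by (simp add: block_proj_add block_proj_scaleR)
qed

lemma block_update_mem_X:
  assumes "y \<in> X" "i \<in> {1..p}" "block_proj blk i y' \<in> Xb i" "agrees_off_block i y' y"
  shows "y' \<in> X"
proof -
  have "block_proj blk j y' \<in> Xb j" if "j \<in> {1..p}" for j
    using assms that X_def by (cases "j = i") (auto simp: agrees_off_block_def)
  then show ?thesis using X_def by simp
qed

lemma agrees_off_block_segment:
  assumes "agrees_off_block i y' y"
  shows "agrees_off_block i (t *\<^sub>R y + (1 - t) *\<^sub>R y') y"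
  using assms unfolding agrees_off_block_def
  by (simp add: block_proj_add block_proj_scaleR flip: scaleR_add_left)

lemma block_proj_diff_if_agrees_off_block:
  assumes "agrees_off_block i x y"
  shows "block_proj blk i (x - y) = x - y"
  using assms blk_range block_proj_diff_eq_if_agree_off unfolding agrees_off_block_def by blast

text \<open>On the slice through y in which only block i moves, the block objective of the
  method agrees up to a constant with Psi = <gf y, .> + V(., y) / gamma + h, so y' minimises
  the strongly convex Psi along the segment to y.\<close>
lemma block_prox_gap:
  assumes i: "i \<in> {1..p}" and step: "0 < \<gamma>"
    and y: "y \<in> X" and y': "y' \<in> X" and agree: "agrees_off_block i y' y"
    and argmin: "\<forall>u\<in>Xb i.
        gf y \<bullet> block_proj blk i y' + 1 / \<gamma> * Vb i (block_proj blk i y') (block_proj blk i y)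
          + hb i (block_proj blk i y')
        \<le> gf y \<bullet> u + 1 / \<gamma> * Vb i u (block_proj blk i y) + hb i u"
  shows "1 / \<gamma> * bregman w gw y' y + h y' + gf y \<bullet> y' + (\<alpha> / \<gamma> + \<alpha>) / 2 * (norm (y' - y))\<^sup>2
    \<le> h y + gf y \<bullet> y"
proof -
  let ?bp = "block_proj blk"
  define \<psi> where "\<psi> j u = gf y \<bullet> u + 1 / \<gamma> * Vb j u (?bp j y) + hb j u" for j u
  define \<Psi> where "\<Psi> = (\<lambda>x. 1 / \<gamma> * bregman w gw x y + h x + gf y \<bullet> x)"
  have \<Psi>_sum: "\<Psi> x = (\<Sum>j=1..p. \<psi> j (?bp j x))" if "x \<in> X" for x
  proof -
    have "gf y \<bullet> x = gf y \<bullet> (\<Sum>j=1..p. ?bp j x)"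
      using sum_block_proj[OF blk_range] by simp
    then have "gf y \<bullet> x = (\<Sum>j=1..p. gf y \<bullet> ?bp j x)"
      by (simp add: inner_sum_right)
    then show ?thesis
      using that y V_sep h_sep by (simp add: \<Psi>_def \<psi>_def sum.distrib sum_distrib_left sum_divide_distrib)
  qed
  have slice_min: "\<Psi> y' \<le> \<Psi> x" if x: "x \<in> X" "agrees_off_block i x y" for x
  proof -
    have "\<psi> j (?bp j y') \<le> \<psi> j (?bp j x)" if j: "j \<in> {1..p}" for j
    proof (cases "j = i")
      case True
      then show ?thesis using argmin i x(1) X_def by (auto simp: \<psi>_def)
    next
      case False
      then show ?thesis using j agree x(2) by (simp add: agrees_off_block_def)
    qed
    then have "(\<Sum>j=1..p. \<psi> j (?bp j y')) \<le> (\<Sum>j=1..p. \<psi> j (?bp j x))"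
      by (rule sum_mono)
    then show ?thesis using \<Psi>_sum x(1) y' by simp
  qed
  have "strongly_convex_on (1 / \<gamma> * \<alpha> + \<alpha>) X (\<lambda>x. 1 / \<gamma> * bregman w gw x y + h x + gf y \<bullet> x + 0)"
    using step by (intro strongly_convex_on_add_affine strongly_convex_on_add h_sc
        strongly_convex_on_cmult strongly_convex_on_bregman[OF w_dgf convex_X]) simp
  then have "strongly_convex_on (\<alpha> / \<gamma> + \<alpha>) X \<Psi>"
    by (simp add: \<Psi>_def)
  then have "\<Psi> y' + (\<alpha> / \<gamma> + \<alpha>) / 2 * (norm (y - y'))\<^sup>2 \<le> \<Psi> y"
  proof (rule strongly_convex_on_min_gap[OF _ y y'])
    fix t :: real assume "t \<in> {0<..<1}"
    then have "t *\<^sub>R y + (1 - t) *\<^sub>R y' \<in> X"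
      using convex_X y y' by (auto intro: convexD)
    then show "\<Psi> y' \<le> \<Psi> (t *\<^sub>R y + (1 - t) *\<^sub>R y')"
      using slice_min agrees_off_block_segment[OF agree] by blast
  qed
  moreover have "bregman w gw y y = 0" by (simp add: bregman_def)
  ultimately show ?thesis by (simp add: \<Psi>_def norm_minus_commute)
qed

lemma block_prox_step_decrease:
  assumes i: "i \<in> {1..p}" and step: "0 < \<gamma>" "\<gamma> * L \<le> \<alpha>"
    and y: "y \<in> X" and y': "y' \<in> X" and agree: "agrees_off_block i y' y"
    and argmin: "\<forall>u\<in>Xb i.
        gf y \<bullet> block_proj blk i y' + 1 / \<gamma> * Vb i (block_proj blk i y') (block_proj blk i y)
          + hb i (block_proj blk i y')
        \<le> gf y \<bullet> u + 1 / \<gamma> * Vb i u (block_proj blk i y) + hb i u"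
  shows "f y' + h y' + \<alpha> / (2 * \<gamma>) * (norm (y' - y))\<^sup>2 \<le> f y + h y"
proof -
  let ?n = "(norm (y' - y))\<^sup>2"
  have prox: "1 / \<gamma> * bregman w gw y' y + h y' + gf y \<bullet> y' + \<alpha> / \<gamma> / 2 * ?n + \<alpha> / 2 * ?n
      \<le> h y + gf y \<bullet> y"
    using block_prox_gap[OF i step(1) y y' agree argmin] by (simp add: add_divide_distrib distrib_right)
  have "\<alpha> / 2 * ?n \<le> bregman w gw y' y"
    by (rule dist_gen_fun_bregman_lower_bound[OF w_dgf convex_X y' y])
  then have "1 / \<gamma> * (\<alpha> / 2 * ?n) \<le> 1 / \<gamma> * bregman w gw y' y"
    using step(1) by (intro mult_left_mono) auto
  then have breg: "\<alpha> / \<gamma> / 2 * ?n \<le> 1 / \<gamma> * bregman w gw y' y"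
    by simp
  have "f (y + (y' - y)) \<le> f y + gf y \<bullet> (y' - y) + L / 2 * ?n"
    using block_lipschitz_descent[OF f_deriv convex_X y _ block_proj_diff_if_agrees_off_block[OF agree]]
      block_lipschitz i y' by simp
  then have descent: "f y' \<le> f y + gf y \<bullet> y' - gf y \<bullet> y + L / 2 * ?n"
    by (simp add: inner_diff_right)
  have L_le: "L / 2 * ?n \<le> \<alpha> / \<gamma> / 2 * ?n"
    using step by (intro mult_right_mono) (auto simp: field_simps)
  have \<alpha>_nonneg: "0 \<le> \<alpha> / 2 * ?n"
    using w_dgf by (simp add: dist_gen_fun_def)
  have half: "\<alpha> / (2 * \<gamma>) = \<alpha> / \<gamma> / 2"
    by simp
  show ?thesis
    unfolding half using prox breg descent L_le \<alpha>_nonneg by linarith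
qed

end

text \<open>xs k i is the iterate x_k^i of the paper (epoch k after the updates of blocks 1..i), so
  xs k 0 = x_k, and sq_gradient_mapping k is Delta(x_k, x_{k-1}).\<close>
locale coordinate_mirror_descent = block_composite_problem +
  fixes \<gamma> :: real and N :: nat and x0 and xs
  assumes step_pos: "0 < \<gamma>" and step_le: "\<gamma> * L \<le> \<alpha>"
    and x0_in: "x0 \<in> X"
    and xs_init: "xs 0 0 = x0"
    and xs_next: "\<forall>k. xs (Suc k) 0 = xs k p"
    and xs_other: "\<forall>k<N. \<forall>i\<in>{1..p}. \<forall>j\<in>{1..p}. j \<noteq> i \<longrightarrow>
        block_proj blk j (xs k i) = block_proj blk j (xs k (i - 1))"
    and xs_in: "\<forall>k<N. \<forall>i\<in>{1..p}. block_proj blk i (xs k i) \<in> Xb i"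
    and xs_argmin: "\<forall>k<N. \<forall>i\<in>{1..p}. \<forall>u\<in>Xb i.
        gf (xs k (i - 1)) \<bullet> block_proj blk i (xs k i)
          + 1 / \<gamma> * Vb i (block_proj blk i (xs k i)) (block_proj blk i (xs k (i - 1)))
          + hb i (block_proj blk i (xs k i))
        \<le> gf (xs k (i - 1)) \<bullet> u + 1 / \<gamma> * Vb i u (block_proj blk i (xs k (i - 1))) + hb i u"
begin

definition block_gradient_mapping :: "nat \<Rightarrow> nat \<Rightarrow> real^'a" where
  "block_gradient_mapping k i = (1 / \<gamma>) *\<^sub>R (block_proj blk i (xs k (i - 1)) - block_proj blk i (xs k i))"

definition sq_gradient_mapping :: "nat \<Rightarrow> real" where
  "sq_gradient_mapping k = (\<Sum>i=1..p. (norm (block_gradient_mapping k i))\<^sup>2)"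

lemma block_step_decrease:
  assumes k: "k < N" and i: "i \<in> {1..p}" and prev: "xs k (i - 1) \<in> X"
  shows "xs k i \<in> X \<and>
    f (xs k i) + h (xs k i) + \<alpha> * \<gamma> / 2 * (norm (block_gradient_mapping k i))\<^sup>2
      \<le> f (xs k (i - 1)) + h (xs k (i - 1))"
proof
  have agree: "agrees_off_block i (xs k i) (xs k (i - 1))"
    using xs_other k i by (simp add: agrees_off_block_def)
  show mem: "xs k i \<in> X"
    using block_update_mem_X[OF prev i _ agree] xs_in k i by blast
  have "block_proj blk i (xs k i) - block_proj blk i (xs k (i - 1)) = xs k i - xs k (i - 1)"
    using block_proj_diff_if_agrees_off_block[OF agree] by (simp add: block_proj_diff)
  then have "block_gradient_mapping k i = (1 / \<gamma>) *\<^sub>R (xs k (i - 1) - xs k i)"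
    unfolding block_gradient_mapping_def by (metis minus_diff_eq)
  then have "(norm (block_gradient_mapping k i))\<^sup>2 = (norm (xs k i - xs k (i - 1)))\<^sup>2 / \<gamma>\<^sup>2"
    using step_pos by (simp add: norm_minus_commute power_divide)
  then have "\<alpha> * \<gamma> / 2 * (norm (block_gradient_mapping k i))\<^sup>2
      = \<alpha> / (2 * \<gamma>) * (norm (xs k i - xs k (i - 1)))\<^sup>2"
    using step_pos by (simp add: power2_eq_square)
  moreover have "f (xs k i) + h (xs k i) + \<alpha> / (2 * \<gamma>) * (norm (xs k i - xs k (i - 1)))\<^sup>2
      \<le> f (xs k (i - 1)) + h (xs k (i - 1))"
    using block_prox_step_decrease[OF i step_pos step_le prev mem agree] xs_argmin k i by blast
  ultimately show "f (xs k i) + h (xs k i) + \<alpha> * \<gamma> / 2 * (norm (block_gradient_mapping k i))\<^sup>2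
      \<le> f (xs k (i - 1)) + h (xs k (i - 1))"
    by simp
qed

lemma epoch_decrease:
  assumes k: "k < N" and start: "xs k 0 \<in> X"
  shows "xs (Suc k) 0 \<in> X \<and>
    f (xs (Suc k) 0) + h (xs (Suc k) 0) + \<alpha> * \<gamma> / 2 * sq_gradient_mapping k \<le> f (xs k 0) + h (xs k 0)"
proof -
  let ?c = "\<alpha> * \<gamma> / 2" and ?T = "\<lambda>i. (norm (block_gradient_mapping k i))\<^sup>2"
  have "xs k i \<in> X \<and> f (xs k i) + h (xs k i) + ?c * (\<Sum>j=1..i. ?T j) \<le> f (xs k 0) + h (xs k 0)"
    if "i \<le> p" for i
    using that
  proof (induction i)
    case 0
    then show ?case using start by simp
  next
    case (Suc i)
    then have IH: "xs k i \<in> X" "f (xs k i) + h (xs k i) + ?c * (\<Sum>j=1..i. ?T j) \<le> f (xs k 0) + h (xs k 0)"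
      by simp_all
    with block_step_decrease[OF k, of "Suc i"] Suc.prems
    have "xs k (Suc i) \<in> X" "f (xs k (Suc i)) + h (xs k (Suc i)) + ?c * ?T (Suc i) \<le> f (xs k i) + h (xs k i)"
      by simp_all
    with IH show ?case
      by (simp add: distrib_left)
  qed
  from this[of p] show ?thesis
    using xs_next by (simp add: sq_gradient_mapping_def)
qed

lemma total_decrease:
  assumes "n \<le> N"
  shows "xs n 0 \<in> X \<and>
    f (xs n 0) + h (xs n 0) + \<alpha> * \<gamma> / 2 * (\<Sum>k<n. sq_gradient_mapping k) \<le> f x0 + h x0"
  using assms
proof (induction n)
  case 0
  then show ?case using xs_init x0_in by simp
next
  case (Suc n)
  then have "xs n 0 \<in> X"
    "f (xs n 0) + h (xs n 0) + \<alpha> * \<gamma> / 2 * (\<Sum>k<n. sq_gradient_mapping k) \<le> f x0 + h x0"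
    by simp_all
  with epoch_decrease[of n] Suc.prems show ?case
    by (simp add: distrib_left)
qed

lemma min_sq_gradient_mapping_le:
  assumes N: "0 < N" and lower: "\<forall>x\<in>X. \<Phi>min \<le> f x + h x"
  shows "Min (sq_gradient_mapping ` {..<N}) \<le> (f x0 + h x0 - \<Phi>min) / (real N * (\<alpha> * \<gamma> / 2))"
proof -
  have c: "0 < \<alpha> * \<gamma> / 2"
    using w_dgf step_pos by (simp add: dist_gen_fun_def)
  have "real N * Min (sq_gradient_mapping ` {..<N}) \<le> (\<Sum>k<N. sq_gradient_mapping k)"
    using sum_bounded_below[of "{..<N}" "Min (sq_gradient_mapping ` {..<N})" sq_gradient_mapping] by simp
  then have "\<alpha> * \<gamma> / 2 * (real N * Min (sq_gradient_mapping ` {..<N}))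
      \<le> \<alpha> * \<gamma> / 2 * (\<Sum>k<N. sq_gradient_mapping k)"
    using c by (intro mult_left_mono) auto
  moreover have "\<Phi>min + \<alpha> * \<gamma> / 2 * (\<Sum>k<N. sq_gradient_mapping k) \<le> f x0 + h x0"
    using total_decrease[of N] lower by fastforce
  ultimately have "\<alpha> * \<gamma> / 2 * (real N * Min (sq_gradient_mapping ` {..<N})) \<le> f x0 + h x0 - \<Phi>min"
    by linarith
  moreover have "0 < real N * (\<alpha> * \<gamma> / 2)"
    using N c by simp
  ultimately show ?thesis
    by (simp add: pos_le_divide_eq mult_ac)
qed

end

theorem proposition1:
  fixes blk :: "'n::finite \<Rightarrow> nat" and p :: nat
    and Xb :: "nat \<Rightarrow> (real^'n) set" and X :: "(real^'n) set"
    and f :: "real^'n \<Rightarrow> real" and gf :: "real^'n \<Rightarrow> real^'n"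
    and Lb :: "nat \<Rightarrow> real" and L :: real
    and h :: "real^'n \<Rightarrow> real" and hb :: "nat \<Rightarrow> real^'n \<Rightarrow> real"
    and \<alpha> :: real and \<Phi> :: "real^'n \<Rightarrow> real" and \<Phi>star :: real
    and w :: "real^'n \<Rightarrow> real" and gw :: "real^'n \<Rightarrow> real^'n"
    and Vb :: "nat \<Rightarrow> real^'n \<Rightarrow> real^'n \<Rightarrow> real"
    and x0 :: "real^'n" and N :: nat and \<gamma> :: real
    and xs :: "nat \<Rightarrow> nat \<Rightarrow> real^'n"
    and Delta :: "nat \<Rightarrow> real" and D :: real
  assumes blk_range: "\<forall>j. blk j \<in> {1..p}"
    and blk_nonempty: "\<forall>i\<in>{1..p}. \<exists>j. blk j = i"
    and Xb_block: "\<forall>i\<in>{1..p}. Xb i \<subseteq> {v. block_proj blk i v = v}"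
    and Xb_closed: "\<forall>i\<in>{1..p}. closed (Xb i)"
    and Xb_convex: "\<forall>i\<in>{1..p}. convex (Xb i)"
    and X_def: "X = {x. \<forall>i\<in>{1..p}. block_proj blk i x \<in> Xb i}"
    and f_deriv: "\<forall>x\<in>X. (f has_derivative (\<lambda>v. gf x \<bullet> v)) (at x within X)"
    and gf_cont: "continuous_on X gf"
    and Lb_lip: "\<forall>i\<in>{1..p}. \<forall>x\<in>X. \<forall>hh. x + block_proj blk i hh \<in> X \<longrightarrow>
        norm (block_proj blk i (gf (x + block_proj blk i hh)) - block_proj blk i (gf x))
          \<le> Lb i * norm (block_proj blk i hh)"
    and L_def: "L = Max (Lb ` {1..p})"
    and L_pos: "L > 0"
    and alpha_pos: "\<alpha> > 0"
    and h_cont: "continuous_on X h"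
    and h_sc: "strongly_convex_on \<alpha> X h"
    and h_sep: "\<forall>x\<in>X. h x = (\<Sum>i=1..p. hb i (block_proj blk i x))"
    and Phi_def: "\<Phi> = (\<lambda>x. f x + h x)"
    and Phistar_min: "\<exists>xm\<in>X. \<Phi> xm = \<Phi>star \<and> (\<forall>x\<in>X. \<Phi>star \<le> \<Phi> x)"
    and w_dgf: "dist_gen_fun \<alpha> X w gw"
    and V_sep: "\<forall>x\<in>X. \<forall>z\<in>X. bregman w gw x z
        = (\<Sum>i=1..p. Vb i (block_proj blk i x) (block_proj blk i z))"
    and x0_in: "x0 \<in> X"
    and N_pos: "N > 0"
    and gamma_def: "\<gamma> = \<alpha> / L"
    and xs_init: "xs 0 0 = x0"
    and xs_next: "\<forall>k. xs (Suc k) 0 = xs k p"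
    and xs_other: "\<forall>k<N. \<forall>i\<in>{1..p}. \<forall>j\<in>{1..p}. j \<noteq> i \<longrightarrow>
        block_proj blk j (xs k i) = block_proj blk j (xs k (i - 1))"
    and xs_in: "\<forall>k<N. \<forall>i\<in>{1..p}. block_proj blk i (xs k i) \<in> Xb i"
    and xs_argmin: "\<forall>k<N. \<forall>i\<in>{1..p}. \<forall>u\<in>Xb i.
        gf (xs k (i - 1)) \<bullet> block_proj blk i (xs k i)
          + 1 / \<gamma> * Vb i (block_proj blk i (xs k i)) (block_proj blk i (xs k (i - 1)))
          + hb i (block_proj blk i (xs k i))
        \<le> gf (xs k (i - 1)) \<bullet> u + 1 / \<gamma> * Vb i u (block_proj blk i (xs k (i - 1))) + hb i u"
    and Delta_def: "\<forall>k. Delta k = (\<Sum>i=1..p.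
        (norm ((1 / \<gamma>) *\<^sub>R (block_proj blk i (xs k (i - 1)) - block_proj blk i (xs k i))))\<^sup>2)"
    and D_def: "D = sqrt ((\<Phi> x0 - \<Phi>star) / L)"
  shows "Min (Delta ` {..<N}) \<le> D\<^sup>2 * L / (real N * (\<alpha>\<^sup>2 / (2 * L)))
         \<and> D\<^sup>2 * L / (real N * (\<alpha>\<^sup>2 / (2 * L))) = 2 * D\<^sup>2 * L\<^sup>2 / (real N * \<alpha>\<^sup>2)"
proof -
  have Lb_le: "Lb i \<le> L" if "i \<in> {1..p}" for i
    using L_def that by simp
  have block_lipschitz: "\<forall>i\<in>{1..p}. \<forall>x\<in>X. \<forall>u. x + block_proj blk i u \<in> X \<longrightarrow>
      norm (block_proj blk i (gf (x + block_proj blk i u)) - block_proj blk i (gf x))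
        \<le> L * norm (block_proj blk i u)"
    using Lb_lip Lb_le by (meson mult_right_mono norm_ge_zero order_trans)
  have step: "0 < \<gamma>" "\<gamma> * L \<le> \<alpha>"
    using gamma_def L_pos alpha_pos by simp_all
  interpret cmd: coordinate_mirror_descent blk p Xb X f gf L h hb \<alpha> w gw Vb \<gamma> N x0 xs
    using blk_range Xb_convex X_def f_deriv block_lipschitz h_sc h_sep w_dgf V_sep step x0_in
      xs_init xs_next xs_other xs_in xs_argmin
    by unfold_locales
  have Phistar_le: "\<forall>x\<in>X. \<Phi>star \<le> \<Phi> x"
    using Phistar_min by blast
  have "Delta = cmd.sq_gradient_mapping"
    using Delta_def by (simp add: fun_eq_iff cmd.sq_gradient_mapping_def cmd.block_gradient_mapping_def)
  then have bound: "Min (Delta ` {..<N}) \<le> (\<Phi> x0 - \<Phi>star) / (real N * (\<alpha> * \<gamma> / 2))"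
    using cmd.min_sq_gradient_mapping_le[OF N_pos] Phistar_le Phi_def by simp
  have gap: "\<Phi> x0 - \<Phi>star = D\<^sup>2 * L"
    using D_def L_pos Phistar_le x0_in by simp
  have rate: "\<alpha> * \<gamma> / 2 = \<alpha>\<^sup>2 / (2 * L)"
    using gamma_def by (simp add: power2_eq_square)
  have "Min (Delta ` {..<N}) \<le> D\<^sup>2 * L / (real N * (\<alpha>\<^sup>2 / (2 * L)))"
    using bound unfolding gap rate .
  moreover have "D\<^sup>2 * L / (real N * (\<alpha>\<^sup>2 / (2 * L))) = 2 * D\<^sup>2 * L\<^sup>2 / (real N * \<alpha>\<^sup>2)"
    using N_pos L_pos alpha_pos by (simp add: field_simps power2_eq_square)
  ultimately show ?thesis ..
qed

end
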